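(* Let $\mathcal{C}$ be a regular category with terminal object $\mathbf{1}$, let $X$ be an object, and let $R$ be a subobject of $X \times X$ which is very weakly point surjective: for every subobject $P$ of $X$ there is an arrow $c : \mathbf{1} \to X$ with $\langle c, c\rangle^*(R) = c^*(P)$ in $\mathsf{Sub}(\mathbf{1})$. Then every natural transformation $\tau : \mathsf{Sub} \Rightarrow \mathsf{Sub}$ has a fixpoint, i.e. there is $s \in \mathsf{Sub}(\mathbf{1})$ with $\tau_{\mathbf{1}}(s) = s$.
   Context: A regular category is a well-powered category with finite limits and images, with images stable under pullback. For an object $A$, $\mathsf{Sub}(A)$ is the poset of subobjects of $A$ (equivalence classes of monomorphisms into $A$, where $m_1 \lesssim m_2$ if $m_1$ factors through $m_2$). For $f : A \to B$, $f^* : \mathsf{Sub}(B) \to \mathsf{Sub}(A)$ is pullback along $f$; this gives a functor $\mathsf{Sub} : \mathcal{C}^{op} \to \mathbf{Set}$. A natural transformation $\tau : \mathsf{Sub} \Rightarrow \mathsf{Sub}$ is a family of functions $\tau_A : \mathsf{Sub}(A) \to \mathsf{Sub}(A)$ with $f^* \circ \tau_B = \tau_A \circ f^*$ for every $f : A \to B$. $\langle c, c\rangle : \mathbf{1} \to X \times X$ is the pairing. *)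

theory Defs
  imports Main
begin

text \<open>Elementary category theory, sufficient to state the result.
  A category has objects of type 'o and arrows of type 'a; Comp g f is g after f.\<close>

record ('o, 'a) cat =
  Obj  :: "'o set"
  Arr  :: "'a set"
  Dom  :: "'a \<Rightarrow> 'o"
  Cod  :: "'a \<Rightarrow> 'o"
  Idt  :: "'o \<Rightarrow> 'a"
  Comp :: "'a \<Rightarrow> 'a \<Rightarrow> 'a"

definition hom :: "('o, 'a) cat \<Rightarrow> 'o \<Rightarrow> 'o \<Rightarrow> 'a set" where
  "hom C A B = {f \<in> Arr C. Dom C f = A \<and> Cod C f = B}"

definition is_category :: "('o, 'a) cat \<Rightarrow> bool" where
  "is_category C \<longleftrightarrow>
     (\<forall>f\<in>Arr C. Dom C f \<in> Obj C \<and> Cod C f \<in> Obj C) \<and>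
     (\<forall>A\<in>Obj C. Idt C A \<in> hom C A A) \<and>
     (\<forall>f\<in>Arr C. \<forall>g\<in>Arr C. Cod C f = Dom C g \<longrightarrow> Comp C g f \<in> hom C (Dom C f) (Cod C g)) \<and>
     (\<forall>f\<in>Arr C. Comp C (Idt C (Cod C f)) f = f \<and> Comp C f (Idt C (Dom C f)) = f) \<and>
     (\<forall>f\<in>Arr C. \<forall>g\<in>Arr C. \<forall>h\<in>Arr C. Cod C f = Dom C g \<longrightarrow> Cod C g = Dom C h \<longrightarrow>
         Comp C h (Comp C g f) = Comp C (Comp C h g) f)"

definition mono :: "('o, 'a) cat \<Rightarrow> 'a \<Rightarrow> bool" where
  "mono C m \<longleftrightarrow> m \<in> Arr C \<and>
     (\<forall>g\<in>Arr C. \<forall>h\<in>Arr C. Cod C g = Dom C m \<longrightarrow> Cod C h = Dom C m \<longrightarrow> Dom C g = Dom C h \<longrightarrow>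
        Comp C m g = Comp C m h \<longrightarrow> g = h)"

definition is_terminal :: "('o, 'a) cat \<Rightarrow> 'o \<Rightarrow> bool" where
  "is_terminal C T \<longleftrightarrow> T \<in> Obj C \<and> (\<forall>A\<in>Obj C. \<exists>!f. f \<in> hom C A T)"

definition is_pullback :: "('o, 'a) cat \<Rightarrow> 'a \<Rightarrow> 'a \<Rightarrow> 'a \<Rightarrow> 'a \<Rightarrow> bool" where
  "is_pullback C f g p q \<longleftrightarrow>
     f \<in> Arr C \<and> g \<in> Arr C \<and> Cod C f = Cod C g \<and>
     p \<in> Arr C \<and> q \<in> Arr C \<and> Dom C p = Dom C q \<and>
     Cod C p = Dom C f \<and> Cod C q = Dom C g \<and>
     Comp C f p = Comp C g q \<and>
     (\<forall>p'\<in>Arr C. \<forall>q'\<in>Arr C. Dom C p' = Dom C q' \<longrightarrow> Cod C p' = Dom C f \<longrightarrow>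
        Cod C q' = Dom C g \<longrightarrow> Comp C f p' = Comp C g q' \<longrightarrow>
        (\<exists>!h. h \<in> hom C (Dom C p') (Dom C p) \<and> Comp C p h = p' \<and> Comp C q h = q'))"

definition is_product :: "('o, 'a) cat \<Rightarrow> 'o \<Rightarrow> 'o \<Rightarrow> 'o \<Rightarrow> 'a \<Rightarrow> 'a \<Rightarrow> bool" where
  "is_product C A B P p1 p2 \<longleftrightarrow>
     A \<in> Obj C \<and> B \<in> Obj C \<and> P \<in> Obj C \<and> p1 \<in> hom C P A \<and> p2 \<in> hom C P B \<and>
     (\<forall>W\<in>Obj C. \<forall>f\<in>hom C W A. \<forall>g\<in>hom C W B.
        \<exists>!h. h \<in> hom C W P \<and> Comp C p1 h = f \<and> Comp C p2 h = g)"

definition pairing :: "('o, 'a) cat \<Rightarrow> 'a \<Rightarrow> 'a \<Rightarrow> 'a \<Rightarrow> 'a \<Rightarrow> 'a" where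
  "pairing C p1 p2 f g =
     (THE h. h \<in> hom C (Dom C f) (Dom C p1) \<and> Comp C p1 h = f \<and> Comp C p2 h = g)"

definition factors :: "('o, 'a) cat \<Rightarrow> 'a \<Rightarrow> 'a \<Rightarrow> bool" where
  "factors C m1 m2 \<longleftrightarrow> (\<exists>h \<in> hom C (Dom C m1) (Dom C m2). m1 = Comp C m2 h)"

definition monos_into :: "('o, 'a) cat \<Rightarrow> 'o \<Rightarrow> 'a set" where
  "monos_into C A = {m. mono C m \<and> Cod C m = A}"

definition Sub :: "('o, 'a) cat \<Rightarrow> 'o \<Rightarrow> 'a set set" where
  "Sub C A = {{m' \<in> monos_into C A. factors C m m' \<and> factors C m' m} | m. m \<in> monos_into C A}"

definition pb_sub :: "('o, 'a) cat \<Rightarrow> 'a \<Rightarrow> 'a set \<Rightarrow> 'a set" where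
  "pb_sub C f S = {m'. m' \<in> monos_into C (Dom C f) \<and> (\<exists>m\<in>S. \<exists>g. is_pullback C f m m' g)}"

definition is_image :: "('o, 'a) cat \<Rightarrow> 'a \<Rightarrow> 'a \<Rightarrow> bool" where
  "is_image C f m \<longleftrightarrow> f \<in> Arr C \<and> m \<in> monos_into C (Cod C f) \<and> factors C f m \<and>
     (\<forall>m' \<in> monos_into C (Cod C f). factors C f m' \<longrightarrow> factors C m m')"

definition has_terminal :: "('o, 'a) cat \<Rightarrow> bool" where
  "has_terminal C \<longleftrightarrow> (\<exists>T. is_terminal C T)"

definition has_pullbacks :: "('o, 'a) cat \<Rightarrow> bool" where
  "has_pullbacks C \<longleftrightarrow> (\<forall>f\<in>Arr C. \<forall>g\<in>Arr C. Cod C f = Cod C g \<longrightarrow> (\<exists>p q. is_pullback C f g p q))"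

text \<open>Finite limits: terminal object and pullbacks (equivalent to all finite limits).\<close>
definition has_finite_limits :: "('o, 'a) cat \<Rightarrow> bool" where
  "has_finite_limits C \<longleftrightarrow> has_terminal C \<and> has_pullbacks C"

definition has_images :: "('o, 'a) cat \<Rightarrow> bool" where
  "has_images C \<longleftrightarrow> (\<forall>f\<in>Arr C. \<exists>m. is_image C f m)"

definition images_pullback_stable :: "('o, 'a) cat \<Rightarrow> bool" where
  "images_pullback_stable C \<longleftrightarrow>
     (\<forall>f m g f' gf m' gm. is_image C f m \<longrightarrow> is_pullback C g f f' gf \<longrightarrow>
        is_pullback C g m m' gm \<longrightarrow> is_image C f' m')"

text \<open>Well-poweredness is automatic here: Sub C A is always a set.\<close>
definition regular_category :: "('o, 'a) cat \<Rightarrow> bool" where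
  "regular_category C \<longleftrightarrow> is_category C \<and> has_finite_limits C \<and> has_images C \<and>
     images_pullback_stable C"

definition nat_trans_Sub :: "('o, 'a) cat \<Rightarrow> ('o \<Rightarrow> 'a set \<Rightarrow> 'a set) \<Rightarrow> bool" where
  "nat_trans_Sub C \<tau> \<longleftrightarrow>
     (\<forall>A\<in>Obj C. \<forall>S\<in>Sub C A. \<tau> A S \<in> Sub C A) \<and>
     (\<forall>f\<in>Arr C. \<forall>S\<in>Sub C (Cod C f). pb_sub C f (\<tau> (Cod C f) S) = \<tau> (Dom C f) (pb_sub C f S))"

end

theory Submission
  imports Defs
begin

text \<open>With \<open>d = \<langle>id, id\<rangle> : X \<rightarrow> X \<times> X\<close> the diagonal, let \<open>Q = \<tau>\<^sub>X(d\<^sup>*R)\<close> and choose \<open>c\<close> with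
  \<open>\<langle>c, c\<rangle>\<^sup>*R = c\<^sup>*Q\<close>. Since \<open>\<langle>c, c\<rangle> = d c\<close> and pullback is functorial, naturality of \<open>\<tau>\<close> gives
  \<open>c\<^sup>*Q = \<tau>\<^sub>1(c\<^sup>*d\<^sup>*R) = \<tau>\<^sub>1(\<langle>c, c\<rangle>\<^sup>*R) = \<tau>\<^sub>1(c\<^sup>*Q)\<close>, so \<open>c\<^sup>*Q\<close> is a fixpoint: this is
  Lawvere's diagonal argument.\<close>

locale category =
  fixes C :: "('o, 'a) cat"
  assumes is_category: "is_category C"
begin

lemma dom_cod_obj: "f \<in> Arr C \<Longrightarrow> Dom C f \<in> Obj C \<and> Cod C f \<in> Obj C"
  using is_category unfolding is_category_def by blast

lemma id_in_hom: "A \<in> Obj C \<Longrightarrow> Idt C A \<in> hom C A A"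
  using is_category unfolding is_category_def by blast

lemma comp_in_hom:
  "f \<in> Arr C \<Longrightarrow> g \<in> Arr C \<Longrightarrow> Cod C f = Dom C g \<Longrightarrow> Comp C g f \<in> hom C (Dom C f) (Cod C g)"
  using is_category unfolding is_category_def by blast

lemma comp_arr [simp]: "f \<in> Arr C \<Longrightarrow> g \<in> Arr C \<Longrightarrow> Cod C f = Dom C g \<Longrightarrow> Comp C g f \<in> Arr C"
  and dom_comp [simp]: "f \<in> Arr C \<Longrightarrow> g \<in> Arr C \<Longrightarrow> Cod C f = Dom C g \<Longrightarrow> Dom C (Comp C g f) = Dom C f"
  and cod_comp [simp]: "f \<in> Arr C \<Longrightarrow> g \<in> Arr C \<Longrightarrow> Cod C f = Dom C g \<Longrightarrow> Cod C (Comp C g f) = Cod C g"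
  using comp_in_hom unfolding hom_def by blast+

lemma comp_id_cod: "f \<in> Arr C \<Longrightarrow> Comp C (Idt C (Cod C f)) f = f"
  and comp_id_dom: "f \<in> Arr C \<Longrightarrow> Comp C f (Idt C (Dom C f)) = f"
  using is_category unfolding is_category_def by blast+

lemma comp_assoc:
  "f \<in> Arr C \<Longrightarrow> g \<in> Arr C \<Longrightarrow> h \<in> Arr C \<Longrightarrow> Cod C f = Dom C g \<Longrightarrow> Cod C g = Dom C h \<Longrightarrow>
   Comp C h (Comp C g f) = Comp C (Comp C h g) f"
  using is_category unfolding is_category_def by blast

lemma homD: "f \<in> hom C A B \<Longrightarrow> f \<in> Arr C \<and> Dom C f = A \<and> Cod C f = B"
  unfolding hom_def by blast

lemma monos_intoD: "m \<in> monos_into C A \<Longrightarrow> m \<in> Arr C \<and> Cod C m = A \<and> mono C m"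
  unfolding monos_into_def mono_def by auto

lemma mono_cancel:
  "mono C m \<Longrightarrow> g \<in> Arr C \<Longrightarrow> h \<in> Arr C \<Longrightarrow> Cod C g = Dom C m \<Longrightarrow> Cod C h = Dom C m \<Longrightarrow>
   Dom C g = Dom C h \<Longrightarrow> Comp C m g = Comp C m h \<Longrightarrow> g = h"
  unfolding mono_def by blast

lemma factors_refl: "m \<in> Arr C \<Longrightarrow> factors C m m"
  unfolding factors_def using id_in_hom[of "Dom C m"] comp_id_dom[of m] dom_cod_obj[of m] by force

lemma factors_trans:
  assumes "m1 \<in> Arr C" "m2 \<in> Arr C" "m3 \<in> Arr C" "factors C m1 m2" "factors C m2 m3"
  shows "factors C m1 m3"
proof -
  obtain h k where h: "h \<in> hom C (Dom C m1) (Dom C m2)" "m1 = Comp C m2 h"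
    and k: "k \<in> hom C (Dom C m2) (Dom C m3)" "m2 = Comp C m3 k"
    using assms(4,5) unfolding factors_def by blast
  have h_arr: "h \<in> Arr C" "Dom C h = Dom C m1" "Cod C h = Dom C m2" using homD[OF h(1)] by auto
  have k_arr: "k \<in> Arr C" "Dom C k = Dom C m2" "Cod C k = Dom C m3" using homD[OF k(1)] by auto
  have "m1 = Comp C m3 (Comp C k h)"
    using h(2) k(2) comp_assoc[OF h_arr(1) k_arr(1) assms(3)] h_arr k_arr by simp
  moreover have "Comp C k h \<in> hom C (Dom C m1) (Dom C m3)"
    using comp_in_hom[OF h_arr(1) k_arr(1)] h_arr k_arr by simp
  ultimately show ?thesis unfolding factors_def by blast
qed

definition subobj :: "'o \<Rightarrow> 'a \<Rightarrow> 'a set" where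
  "subobj A m = {m' \<in> monos_into C A. factors C m m' \<and> factors C m' m}"

lemma subobj_self: "m \<in> monos_into C A \<Longrightarrow> m \<in> subobj A m"
  unfolding subobj_def using factors_refl monos_intoD by blast

lemma subobj_in_Sub: "m \<in> monos_into C A \<Longrightarrow> subobj A m \<in> Sub C A"
  unfolding Sub_def subobj_def by blast

lemma Sub_monos_into: "S \<in> Sub C A \<Longrightarrow> m \<in> S \<Longrightarrow> m \<in> monos_into C A"
  unfolding Sub_def by blast

lemma Sub_nonempty: "S \<in> Sub C A \<Longrightarrow> \<exists>m. m \<in> S"
  unfolding Sub_def using subobj_self unfolding subobj_def by blast

lemma Sub_eq_subobj:
  assumes S: "S \<in> Sub C A" and m: "m \<in> S"
  shows "S = subobj A m"
proof -
  obtain m0 where m0: "m0 \<in> monos_into C A" and S_def: "S = subobj A m0"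
    using S unfolding Sub_def subobj_def by blast
  have m_in: "m \<in> monos_into C A" "factors C m0 m" "factors C m m0"
    using m S_def subobj_def by auto
  have "factors C m x \<longleftrightarrow> factors C m0 x" "factors C x m \<longleftrightarrow> factors C x m0"
    if "x \<in> monos_into C A" for x
    using that m0 m_in factors_trans monos_intoD by meson+
  then show ?thesis unfolding S_def subobj_def by blast
qed

lemma Sub_eqI: "S1 \<in> Sub C A \<Longrightarrow> S2 \<in> Sub C A \<Longrightarrow> m \<in> S1 \<Longrightarrow> m \<in> S2 \<Longrightarrow> S1 = S2"
  using Sub_eq_subobj by metis

lemma pullback_square:
  "is_pullback C f m p q \<Longrightarrow> f \<in> Arr C \<and> m \<in> Arr C \<and> Cod C f = Cod C m \<and>
     p \<in> Arr C \<and> q \<in> Arr C \<and> Dom C p = Dom C q \<and>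
     Cod C p = Dom C f \<and> Cod C q = Dom C m \<and> Comp C f p = Comp C m q"
  unfolding is_pullback_def by blast

lemma pullback_universal:
  "is_pullback C f m p q \<Longrightarrow> p' \<in> Arr C \<Longrightarrow> q' \<in> Arr C \<Longrightarrow> Dom C p' = Dom C q' \<Longrightarrow>
   Cod C p' = Dom C f \<Longrightarrow> Cod C q' = Dom C m \<Longrightarrow> Comp C f p' = Comp C m q' \<Longrightarrow>
   \<exists>!h. h \<in> hom C (Dom C p') (Dom C p) \<and> Comp C p h = p' \<and> Comp C q h = q'"
  unfolding is_pullback_def by blast

lemma pullback_mono:
  assumes pb: "is_pullback C f m p q" and m: "mono C m"
  shows "mono C p"
  unfolding mono_def
proof (intro conjI ballI impI)
  note P = pullback_square[OF pb]
  show "p \<in> Arr C" using P by blast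
  fix g h assume g: "g \<in> Arr C" "Cod C g = Dom C p" and h: "h \<in> Arr C" "Cod C h = Dom C p"
    and dom_eq: "Dom C g = Dom C h" and eq: "Comp C p g = Comp C p h"
  have "Comp C m (Comp C q x) = Comp C f (Comp C p x)" if "x \<in> Arr C" "Cod C x = Dom C p" for x
    using that P comp_assoc[of x q m] comp_assoc[of x p f] by auto
  then have "Comp C m (Comp C q g) = Comp C m (Comp C q h)" using g h eq by metis
  then have q_eq: "Comp C q g = Comp C q h"
    using mono_cancel[OF m] P g h dom_eq by auto
  have "\<exists>!u. u \<in> hom C (Dom C g) (Dom C p) \<and> Comp C p u = Comp C p g \<and> Comp C q u = Comp C q g"
    using pullback_universal[OF pb, of "Comp C p g" "Comp C q g"] P g
      comp_assoc[of g p f] comp_assoc[of g q m] by auto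
  moreover have "g \<in> hom C (Dom C g) (Dom C p)" "h \<in> hom C (Dom C g) (Dom C p)"
    using g h dom_eq unfolding hom_def by auto
  ultimately show "g = h" using eq q_eq by metis
qed

lemma pullback_factors:
  assumes pb: "is_pullback C f m p q" and pb0: "is_pullback C f m0 p0 q0" and "factors C m0 m"
  shows "factors C p0 p"
proof -
  note P = pullback_square[OF pb] and P0 = pullback_square[OF pb0]
  obtain k where k: "k \<in> hom C (Dom C m0) (Dom C m)" "m0 = Comp C m k"
    using assms(3) unfolding factors_def by blast
  have k_arr: "k \<in> Arr C" "Dom C k = Dom C m0" "Cod C k = Dom C m" using homD[OF k(1)] by auto
  have "Comp C f p0 = Comp C (Comp C m k) q0" using P0 k(2) by simp
  also have "\<dots> = Comp C m (Comp C k q0)"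
    using comp_assoc[of q0 k m] k_arr P P0 by simp
  finally obtain h where "h \<in> hom C (Dom C p0) (Dom C p)" "Comp C p h = p0"
    using pullback_universal[OF pb, of p0 "Comp C k q0"] k_arr P0 by auto
  then show ?thesis unfolding factors_def by blast
qed

lemma mono_comp_eq_self:
  assumes "mono C p" "x \<in> hom C (Dom C p) (Dom C p)" "Comp C p x = p"
  shows "x = Idt C (Dom C p)"
proof -
  have p: "p \<in> Arr C" using assms(1) unfolding mono_def by blast
  have "Idt C (Dom C p) \<in> hom C (Dom C p) (Dom C p)" using id_in_hom dom_cod_obj p by blast
  then show ?thesis
    using mono_cancel[OF assms(1), of x "Idt C (Dom C p)"] assms(2,3) comp_id_dom[OF p] homD by auto
qed

lemma pullback_of_mono_cone:
  assumes f: "f \<in> Arr C" and m: "m \<in> Arr C" "Cod C f = Cod C m"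
    and p: "mono C p" and q: "q \<in> Arr C" "Dom C p = Dom C q"
    and cod: "Cod C p = Dom C f" "Cod C q = Dom C m" and square: "Comp C f p = Comp C m q"
    and factor: "\<And>x y. x \<in> Arr C \<Longrightarrow> y \<in> Arr C \<Longrightarrow> Dom C x = Dom C y \<Longrightarrow>
      Cod C x = Dom C f \<Longrightarrow> Cod C y = Dom C m \<Longrightarrow> Comp C f x = Comp C m y \<Longrightarrow>
      \<exists>v\<in>hom C (Dom C x) (Dom C p). Comp C p v = x \<and> Comp C q v = y"
  shows "is_pullback C f m p q"
  unfolding is_pullback_def
proof (intro conjI ballI impI)
  show "p \<in> Arr C" using p unfolding mono_def by blast
  fix x y assume "x \<in> Arr C" "y \<in> Arr C" "Dom C x = Dom C y" "Cod C x = Dom C f" "Cod C y = Dom C m"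
    "Comp C f x = Comp C m y"
  then obtain v where v: "v \<in> hom C (Dom C x) (Dom C p)" "Comp C p v = x" "Comp C q v = y"
    using factor by blast
  moreover have "w = v" if "w \<in> hom C (Dom C x) (Dom C p)" "Comp C p w = x" for w
    using mono_cancel[OF p, of w v] homD[OF that(1)] homD[OF v(1)] that(2) v(2) by simp
  ultimately show "\<exists>!v. v \<in> hom C (Dom C x) (Dom C p) \<and> Comp C p v = x \<and> Comp C q v = y"
    by blast
qed (use assms in auto)

lemma pullback_equivalent_mono:
  assumes pb: "is_pullback C f m p q" and m: "mono C m" and m': "mono C m'"
    and "factors C m' p" and "factors C p m'"
  shows "\<exists>q'. is_pullback C f m m' q'"
proof -
  note P = pullback_square[OF pb]
  obtain h where h: "h \<in> hom C (Dom C m') (Dom C p)" "m' = Comp C p h"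
    using assms(4) unfolding factors_def by blast
  obtain k where k: "k \<in> hom C (Dom C p) (Dom C m')" "p = Comp C m' k"
    using assms(5) unfolding factors_def by blast
  have m'_arr: "m' \<in> Arr C" using m' unfolding mono_def by blast
  have h_arr: "h \<in> Arr C" "Dom C h = Dom C m'" "Cod C h = Dom C p" using homD[OF h(1)] by auto
  have k_arr: "k \<in> Arr C" "Dom C k = Dom C p" "Cod C k = Dom C m'" using homD[OF k(1)] by auto
  have "Comp C p (Comp C h k) = Comp C (Comp C p h) k"
    using comp_assoc[OF k_arr(1) h_arr(1)] P h_arr k_arr by simp
  then have "Comp C p (Comp C h k) = p" using h(2)[symmetric] k(2)[symmetric] by simp
  moreover have "Comp C h k \<in> hom C (Dom C p) (Dom C p)"
    using comp_in_hom[OF k_arr(1) h_arr(1)] h_arr k_arr by simp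
  ultimately have hk: "Comp C h k = Idt C (Dom C p)"
    using mono_comp_eq_self[OF pullback_mono[OF pb m]] by blast
  have "Comp C f m' = Comp C (Comp C f p) h"
    using h(2) comp_assoc[OF h_arr(1)] P h_arr by simp
  also have "\<dots> = Comp C m (Comp C q h)"
    using comp_assoc[OF h_arr(1)] P h_arr by simp
  finally have square: "Comp C f m' = Comp C m (Comp C q h)" .
  have "is_pullback C f m m' (Comp C q h)"
  proof (rule pullback_of_mono_cone[OF _ _ _ m'])
    fix x y assume x: "x \<in> Arr C" and y: "y \<in> Arr C" and "Dom C x = Dom C y"
      and "Cod C x = Dom C f" "Cod C y = Dom C m" "Comp C f x = Comp C m y"
    then obtain u where u: "u \<in> hom C (Dom C x) (Dom C p)" "Comp C p u = x" "Comp C q u = y"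
      using pullback_universal[OF pb] by blast
    have u_arr: "u \<in> Arr C" "Dom C u = Dom C x" "Cod C u = Dom C p" using homD[OF u(1)] by auto
    have "Comp C k u \<in> hom C (Dom C x) (Dom C m')"
      using comp_in_hom[OF u_arr(1) k_arr(1)] u_arr k_arr by simp
    moreover have "Comp C m' (Comp C k u) = x"
      using comp_assoc[OF u_arr(1) k_arr(1) m'_arr] u_arr k_arr u(2) k(2)[symmetric] by simp
    moreover have "Comp C (Comp C q h) (Comp C k u) = Comp C q (Comp C (Comp C h k) u)"
      using comp_assoc[OF _ h_arr(1), of "Comp C k u" q] comp_assoc[OF u_arr(1) k_arr(1) h_arr(1)]
        u_arr k_arr h_arr P by simp
    then have "Comp C (Comp C q h) (Comp C k u) = y"
      using hk comp_id_cod[OF u_arr(1)] u_arr u(3) by simp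
    ultimately show "\<exists>v\<in>hom C (Dom C x) (Dom C m'). Comp C m' v = x \<and> Comp C (Comp C q h) v = y"
      by blast
  qed (use P h_arr h(2) square in auto)
  then show ?thesis by blast
qed

lemma pullback_pasting:
  assumes pb: "is_pullback C f m p q" and pb2: "is_pullback C g p p2 q2"
  shows "is_pullback C (Comp C f g) m p2 (Comp C q q2)"
  unfolding is_pullback_def
proof (intro conjI ballI impI)
  note P = pullback_square[OF pb] and P2 = pullback_square[OF pb2]
  have cg: "Cod C g = Dom C f" using P P2 by auto
  show "Comp C f g \<in> Arr C" "m \<in> Arr C" "Cod C (Comp C f g) = Cod C m" "p2 \<in> Arr C"
    "Comp C q q2 \<in> Arr C" "Dom C p2 = Dom C (Comp C q q2)" "Cod C p2 = Dom C (Comp C f g)"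
    "Cod C (Comp C q q2) = Dom C m" using P P2 cg by auto
  have "Comp C (Comp C f g) p2 = Comp C (Comp C f p) q2"
    using comp_assoc[of p2 g f] comp_assoc[of q2 p f] P P2 cg by auto
  then show "Comp C (Comp C f g) p2 = Comp C m (Comp C q q2)"
    using comp_assoc[of q2 q m] P P2 by auto
  fix p' q' assume p': "p' \<in> Arr C" and q': "q' \<in> Arr C" and d: "Dom C p' = Dom C q'"
    and c1: "Cod C p' = Dom C (Comp C f g)" and c2: "Cod C q' = Dom C m"
    and e: "Comp C (Comp C f g) p' = Comp C m q'"
  have c1': "Cod C p' = Dom C g" using c1 P2 P cg by simp
  have gp: "Comp C g p' \<in> Arr C" "Dom C (Comp C g p') = Dom C p'" "Cod C (Comp C g p') = Dom C f"
    using p' c1' P2 cg by auto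
  have "Comp C f (Comp C g p') = Comp C m q'" using e comp_assoc[of p' g f] p' c1' P P2 cg by auto
  then obtain u where u: "u \<in> hom C (Dom C p') (Dom C p)" "Comp C p u = Comp C g p'" "Comp C q u = q'"
    and u_unique: "\<And>u'. u' \<in> hom C (Dom C p') (Dom C p) \<and> Comp C p u' = Comp C g p' \<and> Comp C q u' = q'
      \<Longrightarrow> u' = u"
    using pullback_universal[OF pb gp(1) q' _ gp(3) c2] gp(2) d by metis
  have u_arr: "u \<in> Arr C" "Dom C u = Dom C p'" "Cod C u = Dom C p" using homD[OF u(1)] by auto
  obtain v where v: "v \<in> hom C (Dom C p') (Dom C p2)" "Comp C p2 v = p'" "Comp C q2 v = u"
    and v_unique: "\<And>v'. v' \<in> hom C (Dom C p') (Dom C p2) \<and> Comp C p2 v' = p' \<and> Comp C q2 v' = u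
      \<Longrightarrow> v' = v"
    using pullback_universal[OF pb2 p' u_arr(1) u_arr(2)[symmetric] c1' u_arr(3)] u(2) by metis
  have v_arr: "v \<in> Arr C" "Cod C v = Dom C p2" using homD[OF v(1)] by auto
  show "\<exists>!w. w \<in> hom C (Dom C p') (Dom C p2) \<and> Comp C p2 w = p' \<and> Comp C (Comp C q q2) w = q'"
  proof (rule ex1I[of _ v])
    show "v \<in> hom C (Dom C p') (Dom C p2) \<and> Comp C p2 v = p' \<and> Comp C (Comp C q q2) v = q'"
      using v u comp_assoc[of v q2 q] v_arr P P2 by auto
    fix w assume w: "w \<in> hom C (Dom C p') (Dom C p2) \<and> Comp C p2 w = p' \<and> Comp C (Comp C q q2) w = q'"
    have w_arr: "w \<in> Arr C" "Dom C w = Dom C p'" "Cod C w = Dom C p2" using w homD by auto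
    have "Comp C q2 w = u"
      using u_unique comp_in_hom[of w q2] comp_assoc[of w q2 p] comp_assoc[of w p2 g]
        comp_assoc[of w q2 q] w_arr P P2 w by auto
    then show "w = v" using v_unique w by blast
  qed
qed

lemma pb_sub_eq_subobj:
  assumes S: "S \<in> Sub C (Cod C f)" and m: "m \<in> S" and pb: "is_pullback C f m p q"
  shows "pb_sub C f S = subobj (Dom C f) p"
proof (intro equalityI subsetI)
  have m_mono: "m \<in> monos_into C (Cod C f)" using Sub_monos_into S m by blast
  fix m' assume "m' \<in> pb_sub C f S"
  then obtain m0 g where m': "m' \<in> monos_into C (Dom C f)" and "m0 \<in> S"
    and pb0: "is_pullback C f m0 m' g"
    unfolding pb_sub_def by blast
  then have "factors C m0 m" "factors C m m0" using Sub_eq_subobj[OF S m] subobj_def by auto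
  then show "m' \<in> subobj (Dom C f) p"
    unfolding subobj_def using pullback_factors[OF pb pb0] pullback_factors[OF pb0 pb] m' by blast
next
  have m_mono: "m \<in> monos_into C (Cod C f)" using Sub_monos_into S m by blast
  fix m' assume "m' \<in> subobj (Dom C f) p"
  then have m': "m' \<in> monos_into C (Dom C f)" "factors C m' p" "factors C p m'"
    unfolding subobj_def by auto
  then show "m' \<in> pb_sub C f S"
    unfolding pb_sub_def using pullback_equivalent_mono[OF pb _ _ m'(2,3)] m_mono monos_intoD m by blast
qed

end

locale category_with_pullbacks = category +
  assumes has_pullbacks: "has_pullbacks C"
begin

lemma pullback_of_mono_exists:
  assumes "f \<in> Arr C" "m \<in> monos_into C (Cod C f)"
  obtains p q where "is_pullback C f m p q" "p \<in> monos_into C (Dom C f)"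
proof -
  have m: "m \<in> Arr C" "Cod C m = Cod C f" "mono C m" using monos_intoD[OF assms(2)] by auto
  then have "\<exists>p q. is_pullback C f m p q"
    using has_pullbacks assms(1) unfolding has_pullbacks_def by simp
  then obtain p q where pb: "is_pullback C f m p q" by blast
  then have "p \<in> monos_into C (Dom C f)"
    using pullback_mono[OF pb m(3)] pullback_square[OF pb] unfolding monos_into_def by simp
  then show thesis using that pb by blast
qed

lemma pb_sub_in_Sub:
  assumes f: "f \<in> Arr C" and S: "S \<in> Sub C (Cod C f)"
  shows "pb_sub C f S \<in> Sub C (Dom C f)"
proof -
  obtain m where m: "m \<in> S" using Sub_nonempty S by blast
  obtain p q where pb: "is_pullback C f m p q" and "p \<in> monos_into C (Dom C f)"
    using pullback_of_mono_exists[OF f Sub_monos_into[OF S m]] by blast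
  then show ?thesis using pb_sub_eq_subobj[OF S m pb] subobj_in_Sub by simp
qed

lemma pb_sub_comp:
  assumes f: "f \<in> Arr C" and g: "g \<in> Arr C" and fg: "Cod C f = Dom C g" and S: "S \<in> Sub C (Cod C g)"
  shows "pb_sub C (Comp C g f) S = pb_sub C f (pb_sub C g S)"
proof -
  obtain m where m: "m \<in> S" using Sub_nonempty S by blast
  obtain p q where pb: "is_pullback C g m p q" and p: "p \<in> monos_into C (Dom C g)"
    using pullback_of_mono_exists[OF g Sub_monos_into[OF S m]] by blast
  obtain p2 q2 where pb2: "is_pullback C f p p2 q2" and p2: "p2 \<in> monos_into C (Dom C f)"
    using pullback_of_mono_exists[OF f] p fg by metis
  have "p \<in> pb_sub C g S" using pb p m unfolding pb_sub_def by blast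
  then have "p2 \<in> pb_sub C f (pb_sub C g S)" using pb2 p2 unfolding pb_sub_def by blast
  moreover have "p2 \<in> pb_sub C (Comp C g f) S"
    using pullback_pasting[OF pb pb2] p2 m f g fg unfolding pb_sub_def by auto
  moreover have "pb_sub C (Comp C g f) S \<in> Sub C (Dom C f)"
    using pb_sub_in_Sub[OF comp_arr[OF f g fg]] f g fg S by simp
  moreover have "pb_sub C f (pb_sub C g S) \<in> Sub C (Dom C f)"
    using pb_sub_in_Sub[OF f] pb_sub_in_Sub[OF g S] fg by simp
  ultimately show ?thesis using Sub_eqI by blast
qed

end

lemma nat_trans_Sub_in_Sub: "nat_trans_Sub C \<tau> \<Longrightarrow> A \<in> Obj C \<Longrightarrow> S \<in> Sub C A \<Longrightarrow> \<tau> A S \<in> Sub C A"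
  unfolding nat_trans_Sub_def by blast

lemma nat_trans_Sub_natural:
  "nat_trans_Sub C \<tau> \<Longrightarrow> f \<in> Arr C \<Longrightarrow> S \<in> Sub C (Cod C f) \<Longrightarrow>
   pb_sub C f (\<tau> (Cod C f) S) = \<tau> (Dom C f) (pb_sub C f S)"
  unfolding nat_trans_Sub_def by blast

lemma product_projections: "is_product C A B P p1 p2 \<Longrightarrow> p1 \<in> hom C P A \<and> p2 \<in> hom C P B"
  unfolding is_product_def by blast

lemma product_universal:
  "is_product C A B P p1 p2 \<Longrightarrow> W \<in> Obj C \<Longrightarrow> f \<in> hom C W A \<Longrightarrow> g \<in> hom C W B \<Longrightarrow>
   \<exists>!h. h \<in> hom C W P \<and> Comp C p1 h = f \<and> Comp C p2 h = g"
  unfolding is_product_def by blast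

lemma (in category) pairing_eqI:
  assumes prod: "is_product C A B P p1 p2" and h: "h \<in> hom C W P"
  shows "pairing C p1 p2 (Comp C p1 h) (Comp C p2 h) = h"
proof -
  have h_arr: "h \<in> Arr C" "Dom C h = W" "Cod C h = P" using homD[OF h] by auto
  have p1: "p1 \<in> Arr C" "Dom C p1 = P" "Cod C p1 = A"
    and p2: "p2 \<in> Arr C" "Dom C p2 = P" "Cod C p2 = B"
    using product_projections[OF prod] homD by blast+
  have "Comp C p1 h \<in> hom C W A" "Comp C p2 h \<in> hom C W B"
    using comp_in_hom[OF h_arr(1) p1(1)] comp_in_hom[OF h_arr(1) p2(1)] h_arr p1 p2 by simp_all
  moreover have "W \<in> Obj C" using dom_cod_obj[OF h_arr(1)] h_arr by simp
  ultimately have "\<exists>!k. k \<in> hom C W P \<and> Comp C p1 k = Comp C p1 h \<and> Comp C p2 k = Comp C p2 h"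
    using product_universal[OF prod] by blast
  moreover have "Dom C (Comp C p1 h) = W" "Dom C p1 = P" using h_arr p1 by simp_all
  ultimately show ?thesis
    unfolding pairing_def using h by (simp only:) (rule the1_equality; blast)
qed

theorem (in category_with_pullbacks) fixpoint_of_very_weakly_point_surjective:
  assumes X: "X \<in> Obj C"
    and prod: "is_product C X X P p1 p2"
    and R: "R \<in> Sub C P"
    and surj: "\<forall>Q\<in>Sub C X. \<exists>c\<in>hom C T X. pb_sub C (pairing C p1 p2 c c) R = pb_sub C c Q"
    and \<tau>: "nat_trans_Sub C \<tau>"
  shows "\<exists>s\<in>Sub C T. \<tau> T s = s"
proof -
  have p1: "p1 \<in> Arr C" "Dom C p1 = P" "Cod C p1 = X"
    and p2: "p2 \<in> Arr C" "Dom C p2 = P" "Cod C p2 = X"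
    using product_projections[OF prod] homD by blast+
  have "\<exists>!d. d \<in> hom C X P \<and> Comp C p1 d = Idt C X \<and> Comp C p2 d = Idt C X"
    using product_universal[OF prod X id_in_hom[OF X] id_in_hom[OF X]] .
  then obtain d where d: "d \<in> hom C X P" "Comp C p1 d = Idt C X" "Comp C p2 d = Idt C X"
    by blast
  have d_arr: "d \<in> Arr C" "Dom C d = X" "Cod C d = P" using homD[OF d(1)] by auto
  have dR: "pb_sub C d R \<in> Sub C X" using pb_sub_in_Sub[of d R] d_arr R by simp
  define Q where "Q = \<tau> X (pb_sub C d R)"
  have Q: "Q \<in> Sub C X" unfolding Q_def using nat_trans_Sub_in_Sub[OF \<tau> X dR] .
  then obtain c where c: "c \<in> hom C T X"
    and c_eq: "pb_sub C (pairing C p1 p2 c c) R = pb_sub C c Q"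
    using surj by blast
  have c_arr: "c \<in> Arr C" "Dom C c = T" "Cod C c = X" using homD[OF c] by auto
  have "Comp C p1 (Comp C d c) = c" "Comp C p2 (Comp C d c) = c"
    using comp_assoc[OF c_arr(1) d_arr(1) p1(1)] comp_assoc[OF c_arr(1) d_arr(1) p2(1)]
      c_arr d_arr p1 p2 d(2,3) comp_id_cod[OF c_arr(1)] by simp_all
  moreover have "Comp C d c \<in> hom C T P"
    using comp_in_hom[OF c_arr(1) d_arr(1)] c_arr d_arr by simp
  ultimately have diagonal: "pairing C p1 p2 c c = Comp C d c"
    using pairing_eqI[OF prod, of "Comp C d c" T] by simp
  have "pb_sub C c Q = \<tau> T (pb_sub C c (pb_sub C d R))"
    using nat_trans_Sub_natural[OF \<tau> c_arr(1)] c_arr dR unfolding Q_def by simp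
  also have "pb_sub C c (pb_sub C d R) = pb_sub C c Q"
    using c_eq diagonal pb_sub_comp[OF c_arr(1) d_arr(1)] c_arr d_arr R by simp
  finally have "\<tau> T (pb_sub C c Q) = pb_sub C c Q" ..
  moreover have "pb_sub C c Q \<in> Sub C T" using pb_sub_in_Sub[of c Q] c_arr Q by simp
  ultimately show ?thesis by blast
qed

theorem lemma5:
  fixes C :: "('o, 'a) cat" and T X P :: 'o and p1 p2 :: 'a and R :: "'a set"
    and \<tau> :: "'o \<Rightarrow> 'a set \<Rightarrow> 'a set"
  assumes "regular_category C"
    and "is_terminal C T"
    and "X \<in> Obj C"
    and "is_product C X X P p1 p2"
    and "R \<in> Sub C P"
    and "\<forall>Q\<in>Sub C X. \<exists>c\<in>hom C T X. pb_sub C (pairing C p1 p2 c c) R = pb_sub C c Q"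
    and "nat_trans_Sub C \<tau>"
  shows "\<exists>s\<in>Sub C T. \<tau> T s = s"
proof -
  have "is_category C" "has_pullbacks C"
    using assms(1) unfolding regular_category_def has_finite_limits_def by blast+
  then interpret category_with_pullbacks C
    by (intro category_with_pullbacks.intro category.intro category_with_pullbacks_axioms.intro)
  show ?thesis
    using fixpoint_of_very_weakly_point_surjective[OF assms(3-7)] .
qed

end
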